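(* Let $G\simeq G'\rtimes A$ be a Frobenius group whose Frobenius kernel is the commutator subgroup $G'$ and with (necessarily abelian) Frobenius complement $A$. Then for every $x\in G\setminus G'$ one has $\mathrm{nr}(x)\notin\mathbb{Z}[G]$.
   Context: A Frobenius group is a finite group $G$ with a proper nontrivial subgroup $H$ (a Frobenius complement) such that $H\cap gHg^{-1}=\{1\}$ for all $g\in G\setminus H$; then there is a unique normal subgroup $N$ (the Frobenius kernel) with $G=N\rtimes H$. $\mathrm{nr}$ denotes the reduced norm of $\mathbb{Q}[G]$, with values in $\zeta(\mathbb{Q}[G])\subseteq\mathbb{Q}[G]$. *)

theory Defs
  imports "HOL-Algebra.Solvable_Groups" "Jordan_Normal_Form.Determinant"
begin

definition frobenius_complement :: "('a, 'b) monoid_scheme \<Rightarrow> 'a set \<Rightarrow> bool" where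
  "frobenius_complement G H \<longleftrightarrow>
     group G \<and> finite (carrier G) \<and> subgroup H G \<and> H \<noteq> {\<one>\<^bsub>G\<^esub>} \<and> H \<noteq> carrier G \<and>
     (\<forall>g \<in> carrier G - H. H \<inter> (g <#\<^bsub>G\<^esub> H #>\<^bsub>G\<^esub> inv\<^bsub>G\<^esub> g) = {\<one>\<^bsub>G\<^esub>})"

definition frobenius_kernel :: "('a, 'b) monoid_scheme \<Rightarrow> 'a set \<Rightarrow> 'a set \<Rightarrow> bool" where
  "frobenius_kernel G H N \<longleftrightarrow>
     frobenius_complement G H \<and> N \<lhd> G \<and> N \<inter> H = {\<one>\<^bsub>G\<^esub>} \<and> N <#>\<^bsub>G\<^esub> H = carrier G"

definition is_rep :: "('a, 'b) monoid_scheme \<Rightarrow> nat \<Rightarrow> ('a \<Rightarrow> complex mat) \<Rightarrow> bool" where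
  "is_rep G n \<rho> \<longleftrightarrow> n > 0 \<and> (\<forall>g \<in> carrier G. \<rho> g \<in> carrier_mat n n) \<and>
     \<rho> \<one>\<^bsub>G\<^esub> = 1\<^sub>m n \<and>
     (\<forall>g \<in> carrier G. \<forall>h \<in> carrier G. \<rho> (g \<otimes>\<^bsub>G\<^esub> h) = \<rho> g * \<rho> h)"

definition invariant_subspace :: "('a, 'b) monoid_scheme \<Rightarrow> nat \<Rightarrow> ('a \<Rightarrow> complex mat) \<Rightarrow> complex vec set \<Rightarrow> bool" where
  "invariant_subspace G n \<rho> W \<longleftrightarrow> W \<subseteq> carrier_vec n \<and> 0\<^sub>v n \<in> W \<and>
     (\<forall>v \<in> W. \<forall>w \<in> W. v + w \<in> W) \<and> (\<forall>c. \<forall>v \<in> W. c \<cdot>\<^sub>v v \<in> W) \<and>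
     (\<forall>g \<in> carrier G. \<forall>v \<in> W. \<rho> g *\<^sub>v v \<in> W)"

definition irrep :: "('a, 'b) monoid_scheme \<Rightarrow> nat \<Rightarrow> ('a \<Rightarrow> complex mat) \<Rightarrow> bool" where
  "irrep G n \<rho> \<longleftrightarrow> is_rep G n \<rho> \<and>
     (\<forall>W. invariant_subspace G n \<rho> W \<longrightarrow> W = {0\<^sub>v n} \<or> W = carrier_vec n)"

definition rep_char :: "('a, 'b) monoid_scheme \<Rightarrow> nat \<Rightarrow> ('a \<Rightarrow> complex mat) \<Rightarrow> 'a \<Rightarrow> complex" where
  "rep_char G n \<rho> = (\<lambda>g. if g \<in> carrier G then (\<Sum>i<n. \<rho> g $$ (i, i)) else 0)"

definition irr_chars :: "('a, 'b) monoid_scheme \<Rightarrow> ('a \<Rightarrow> complex) set" where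
  "irr_chars G = {\<chi>. \<exists>n \<rho>. irrep G n \<rho> \<and> \<chi> = rep_char G n \<rho>}"

definition rep_of_char :: "('a, 'b) monoid_scheme \<Rightarrow> ('a \<Rightarrow> complex) \<Rightarrow> nat \<times> ('a \<Rightarrow> complex mat)" where
  "rep_of_char G \<chi> = (SOME (n, \<rho>). irrep G n \<rho> \<and> \<chi> = rep_char G n \<rho>)"

text \<open>Elements of Q[G] are functions carrier G \<rightarrow> Q (coefficients); a representation is
  extended linearly.\<close>
definition rep_alg :: "('a, 'b) monoid_scheme \<Rightarrow> nat \<Rightarrow> ('a \<Rightarrow> complex mat) \<Rightarrow> ('a \<Rightarrow> rat) \<Rightarrow> complex mat" where
  "rep_alg G n \<rho> \<alpha> = mat n n (\<lambda>(i, j). \<Sum>g \<in> carrier G. of_rat (\<alpha> g) * \<rho> g $$ (i, j))"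

text \<open>Reduced norm of Q[G], computed after extension of scalars to C (a splitting field):
  nr(alpha) = sum over irreducible characters chi of det(rho_chi(alpha)) e_chi, where
  e_chi = chi(1)/|G| sum_g chi(g^-1) g is the central primitive idempotent.
  The result is given by its coefficient function G \<rightarrow> C.\<close>
definition reduced_norm :: "('a, 'b) monoid_scheme \<Rightarrow> ('a \<Rightarrow> rat) \<Rightarrow> 'a \<Rightarrow> complex" where
  "reduced_norm G \<alpha> = (\<lambda>g. if g \<in> carrier G then
     (\<Sum>\<chi> \<in> irr_chars G.
        (case rep_of_char G \<chi> of (n, \<rho>) \<Rightarrow> det (rep_alg G n \<rho> \<alpha>))
        * \<chi> \<one>\<^bsub>G\<^esub> / of_nat (card (carrier G)) * \<chi> (inv\<^bsub>G\<^esub> g))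
     else 0)"

definition grp_elem :: "('a, 'b) monoid_scheme \<Rightarrow> 'a \<Rightarrow> 'a \<Rightarrow> rat" where
  "grp_elem G x = (\<lambda>g. if g = x then 1 else 0)"

definition in_integral_group_ring :: "('a, 'b) monoid_scheme \<Rightarrow> ('a \<Rightarrow> complex) \<Rightarrow> bool" where
  "in_integral_group_ring G \<beta> \<longleftrightarrow> (\<forall>g \<in> carrier G. \<beta> g \<in> \<int>)"

end

theory Submission
  imports Defs "Jordan_Normal_Form.Schur_Decomposition" "HOL-Algebra.Multiplicative_Group"
begin

(* Let N = G' be the Frobenius kernel and x not in N. The coefficient of x in nr(x) is
   (1/|G|) * sum over chi of det rho_chi(x) * chi(1) * chi(x^-1). For an irreducible rho, the
   N-fixed vectors form an invariant subspace. If it is everything, rho factors through the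
   abelian group G/N, so rho is linear and its summand is 1/|G|. If it is zero, the sum of
   rho(m) over m in N vanishes; as every coset yN outside N is a single N-conjugacy class
   (the centraliser in N of y is trivial), chi vanishes off N. So the coefficient is s/|G|,
   where s is the number of linear characters of G/N = A; orthogonality on A gives
   1 <= s <= |A| < |G|, hence s/|G| is not an integer. *)

section \<open>Matrices\<close>

definition trace :: "'a::comm_ring_1 mat \<Rightarrow> 'a" where
  "trace M = (\<Sum>i<dim_row M. M $$ (i, i))"

lemma trace_mult_comm:
  fixes A B :: "'a::comm_ring_1 mat"
  assumes A: "A \<in> carrier_mat n m" and B: "B \<in> carrier_mat m n"
  shows "trace (A * B) = trace (B * A)"
proof -
  have "trace (A * B) = (\<Sum>i<n. \<Sum>k<m. A $$ (i, k) * B $$ (k, i))"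
    using A B unfolding trace_def by (intro sum.cong) (auto simp: scalar_prod_def atLeast0LessThan)
  also have "\<dots> = (\<Sum>k<m. \<Sum>i<n. B $$ (k, i) * A $$ (i, k))"
    by (subst sum.swap) (simp add: mult.commute)
  also have "\<dots> = trace (B * A)"
    using A B unfolding trace_def by (intro sum.cong) (auto simp: scalar_prod_def atLeast0LessThan)
  finally show ?thesis .
qed

lemma trace_eq_sum_eigenvalues:
  fixes M :: "complex mat"
  assumes M: "M \<in> carrier_mat n n" and cp: "char_poly M = (\<Prod>a\<leftarrow>es. [:- a, 1:])"
  shows "trace M = sum_list es"
proof -
  obtain B P Q where sd: "schur_decomposition M es = (B, P, Q)" by (metis prod_cases3)
  with schur_decomposition[OF M cp] have "similar_mat_wit M B P Q" and diag: "diag_mat B = es"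
    by auto
  then have carr: "B \<in> carrier_mat n n" "P \<in> carrier_mat n n" "Q \<in> carrier_mat n n"
    and QP: "Q * P = 1\<^sub>m n" and MPBQ: "M = P * B * Q"
    using M unfolding similar_mat_wit_def Let_def by auto
  have "trace M = trace (Q * (P * B))"
    unfolding MPBQ using carr by (intro trace_mult_comm) auto
  also have "Q * (P * B) = B"
    using carr QP by (simp add: assoc_mult_mat[symmetric])
  also have "trace B = sum_list es"
    unfolding diag[symmetric] diag_mat_def trace_def using carr
    by (simp add: sum_list_sum_nth atLeast0LessThan)
  finally show ?thesis .
qed

lemma eigenvalue_pow_eq_one:
  fixes M :: "'a::field mat"
  assumes M: "M \<in> carrier_mat n n" and pow: "M ^\<^sub>m k = 1\<^sub>m n" and e: "eigenvalue M e"
  shows "e ^ k = 1"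
proof -
  obtain v where ev: "eigenvector M v e" using e unfolding eigenvalue_def by blast
  then have v: "v \<in> carrier_vec n" "v \<noteq> 0\<^sub>v n"
    using M unfolding eigenvector_def by auto
  then obtain i where i: "i < n" "v $ i \<noteq> 0" by (metis eq_vecI carrier_vecD index_zero_vec)
  have "v = e ^ k \<cdot>\<^sub>v v"
    using eigenvector_pow[OF M ev, of k] v unfolding pow by simp
  then have "v $ i = e ^ k * v $ i" using i v by (metis carrier_vecD index_smult_vec(1))
  then show ?thesis using i by simp
qed

lemma trace_eq_sum_roots_of_unity:
  fixes M :: "complex mat"
  assumes M: "M \<in> carrier_mat n n" and pow: "M ^\<^sub>m k = 1\<^sub>m n"
  shows "\<exists>es. length es = n \<and> (\<forall>e\<in>set es. e ^ k = 1) \<and> trace M = sum_list es"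
proof -
  obtain es where cp: "char_poly M = (\<Prod>a\<leftarrow>es. [:- a, 1:])" and len: "length es = n"
    using char_poly_factorized[OF M] by blast
  have "eigenvalue M e" if "e \<in> set es" for e
    using that unfolding eigenvalue_root_char_poly[OF M] cp poly_prod_list
    by (auto simp: prod_list_zero_iff)
  then show ?thesis
    using len trace_eq_sum_eigenvalues[OF M cp] eigenvalue_pow_eq_one[OF M pow] by blast
qed

lemma complex_mat_has_eigenvector:
  fixes M :: "complex mat"
  assumes M: "M \<in> carrier_mat n n" and n: "0 < n"
  shows "\<exists>e v. eigenvector M v e"
proof -
  obtain es where cp: "char_poly M = (\<Prod>a\<leftarrow>es. [:- a, 1:])" and len: "length es = n"
    using char_poly_factorized[OF M] by blast
  then have "poly (char_poly M) (hd es) = 0"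
    using n unfolding poly_prod_list by (cases es) auto
  then show ?thesis
    unfolding eigenvalue_root_char_poly[OF M, symmetric] eigenvalue_def by blast
qed

text \<open>Padded to square matrices, the left factor acquires a zero column, so its
  determinant vanishes although the product has determinant d ^ n.\<close>
lemma card_le_if_factors_smult_one:
  fixes b :: "'j \<Rightarrow> 'i \<Rightarrow> 'a::field" and c :: "'i \<Rightarrow> 'j \<Rightarrow> 'a"
  assumes I: "finite I" and J: "finite J" and d: "d \<noteq> 0"
    and factors: "\<And>j j'. j \<in> J \<Longrightarrow> j' \<in> J \<Longrightarrow>
      (\<Sum>i\<in>I. b j i * c i j') = (if j = j' then d else 0)"
  shows "card J \<le> card I"
proof (rule ccontr)
  define n k where "n = card J" and "k = card I"
  assume "\<not> card J \<le> card I"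
  then have kn: "k < n" unfolding n_def k_def by simp
  obtain ei where ei: "bij_betw ei {0..<k} I"
    using ex_bij_betw_nat_finite[OF I] unfolding k_def by blast
  obtain ej where ej: "bij_betw ej {0..<n} J"
    using ex_bij_betw_nat_finite[OF J] unfolding n_def by blast
  define B where "B = mat n n (\<lambda>(r, l). if l < k then b (ej r) (ei l) else 0)"
  define C where "C = mat n n (\<lambda>(l, s). if l < k then c (ei l) (ej s) else 0)"
  have carr: "B \<in> carrier_mat n n" "C \<in> carrier_mat n n" unfolding B_def C_def by auto
  have "B * C = d \<cdot>\<^sub>m 1\<^sub>m n"
  proof (rule eq_matI)
    fix r s assume "r < dim_row (d \<cdot>\<^sub>m 1\<^sub>m n)" "s < dim_col (d \<cdot>\<^sub>m 1\<^sub>m n)"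
    then have r: "r < n" and s: "s < n" by auto
    have "(B * C) $$ (r, s) = (\<Sum>l<n. if l < k then b (ej r) (ei l) * c (ei l) (ej s) else 0)"
      using r s unfolding B_def C_def
      by (auto simp: scalar_prod_def atLeast0LessThan intro!: sum.cong)
    also have "\<dots> = (\<Sum>l<k. b (ej r) (ei l) * c (ei l) (ej s))"
      using kn by (intro sum.mono_neutral_cong_right) auto
    also have "\<dots> = (\<Sum>i\<in>I. b (ej r) i * c i (ej s))"
      using sum.reindex_bij_betw[OF ei, of "\<lambda>i. b (ej r) i * c i (ej s)"]
      by (simp add: atLeast0LessThan)
    also have "\<dots> = (if r = s then d else 0)"
    proof -
      have "ej r \<in> J" "ej s \<in> J" using ej r s by (auto dest: bij_betwE)
      moreover have "ej r = ej s \<longleftrightarrow> r = s"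
        using ej r s unfolding bij_betw_def inj_on_def by auto
      ultimately show ?thesis using factors by simp
    qed
    finally show "(B * C) $$ (r, s) = (d \<cdot>\<^sub>m 1\<^sub>m n) $$ (r, s)" using r s by simp
  qed (auto simp: B_def C_def)
  then have "det B * det C = d ^ n"
    using det_mult[OF carr] by simp
  moreover have "det B = 0"
  proof -
    have "B *\<^sub>v unit_vec n (n - 1) = 0\<^sub>v n"
    proof (rule eq_vecI)
      fix r assume "r < dim_vec (0\<^sub>v n :: 'a vec)"
      then show "(B *\<^sub>v unit_vec n (n - 1)) $ r = 0\<^sub>v n $ r"
        using kn by (simp add: B_def)
    qed (simp add: B_def)
    then show ?thesis
      using kn unfolding det_0_iff_vec_prod_zero[OF carr(1)]
      by (intro exI[of _ "unit_vec n (n - 1)"]) (auto simp: unit_vec_eq)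
  qed
  ultimately show False using d by simp
qed

lemma eq_mat_if_mult_vec_eq:
  fixes A B :: "'a::comm_ring_1 mat"
  assumes A: "A \<in> carrier_mat n m" and B: "B \<in> carrier_mat n m"
    and eq: "\<And>v. v \<in> carrier_vec m \<Longrightarrow> A *\<^sub>v v = B *\<^sub>v v"
  shows "A = B"
proof (rule eq_matI)
  fix i j assume "i < dim_row B" "j < dim_col B"
  then have i: "i < n" and j: "j < m" using B by auto
  have "A $$ (i, j) = (A *\<^sub>v unit_vec m j) $ i" using A i j by simp
  also have "\<dots> = (B *\<^sub>v unit_vec m j) $ i" using eq[of "unit_vec m j"] by simp
  also have "\<dots> = B $$ (i, j)" using B i j by simp
  finally show "A $$ (i, j) = B $$ (i, j)" .
qed (use A B in auto)

section \<open>Representations\<close>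

locale group_rep = group G for G (structure) +
  fixes n :: nat and \<rho> :: "'a \<Rightarrow> complex mat"
  assumes is_rep: "is_rep G n \<rho>"
begin

lemma dim_pos: "0 < n"
  using is_rep unfolding is_rep_def by auto

lemma rep_carrier [simp]: "g \<in> carrier G \<Longrightarrow> \<rho> g \<in> carrier_mat n n"
  using is_rep unfolding is_rep_def by auto

lemma rep_dim [simp]: "g \<in> carrier G \<Longrightarrow> dim_row (\<rho> g) = n" "g \<in> carrier G \<Longrightarrow> dim_col (\<rho> g) = n"
  using rep_carrier carrier_matD by blast+

lemma rep_one [simp]: "\<rho> \<one> = 1\<^sub>m n"
  using is_rep unfolding is_rep_def by auto

lemma rep_mult: "g \<in> carrier G \<Longrightarrow> h \<in> carrier G \<Longrightarrow> \<rho> (g \<otimes> h) = \<rho> g * \<rho> h"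
  using is_rep unfolding is_rep_def by auto

lemma rep_mult_inv: "g \<in> carrier G \<Longrightarrow> \<rho> g * \<rho> (inv g) = 1\<^sub>m n"
  by (metis inv_closed r_inv rep_mult rep_one)

lemma rep_pow: "g \<in> carrier G \<Longrightarrow> \<rho> (g [^] (k::nat)) = \<rho> g ^\<^sub>m k"
  by (induction k) (auto simp: rep_mult)

lemma rep_mult_vec:
  "g \<in> carrier G \<Longrightarrow> h \<in> carrier G \<Longrightarrow> v \<in> carrier_vec n \<Longrightarrow> \<rho> g *\<^sub>v (\<rho> h *\<^sub>v v) = \<rho> (g \<otimes> h) *\<^sub>v v"
  by (simp add: rep_mult assoc_mult_mat_vec[OF rep_carrier rep_carrier])

lemma rep_char_eq_trace: "g \<in> carrier G \<Longrightarrow> rep_char G n \<rho> g = trace (\<rho> g)"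
  unfolding rep_char_def trace_def by simp

lemma rep_char_conj:
  assumes g: "g \<in> carrier G" and h: "h \<in> carrier G"
  shows "rep_char G n \<rho> (inv h \<otimes> g \<otimes> h) = rep_char G n \<rho> g"
proof -
  have "\<rho> (inv h \<otimes> g \<otimes> h) = \<rho> (inv h) * (\<rho> g * \<rho> h)"
    using g h by (simp add: rep_mult assoc_mult_mat[of _ n n _ n _ n])
  then have "rep_char G n \<rho> (inv h \<otimes> g \<otimes> h) = trace (\<rho> (inv h) * (\<rho> g * \<rho> h))"
    using g h by (simp add: rep_char_eq_trace)
  also have "\<dots> = trace (\<rho> g * \<rho> h * \<rho> (inv h))"
    using g h by (intro trace_mult_comm) auto
  also have "\<rho> g * \<rho> h * \<rho> (inv h) = \<rho> g"
    using g h by (simp add: assoc_mult_mat[OF rep_carrier rep_carrier rep_carrier] rep_mult_inv)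
  finally show ?thesis using g by (simp add: rep_char_eq_trace)
qed

lemma rep_char_eq_sum_roots_of_unity:
  assumes g: "g \<in> carrier G"
  shows "\<exists>es. length es = n \<and> (\<forall>e\<in>set es. e ^ card (carrier G) = 1) \<and> rep_char G n \<rho> g = sum_list es"
proof -
  have "g [^] card (carrier G) = \<one>"
    using pow_order_eq_1[OF g] by (simp add: Coset.order_def)
  then have "\<rho> g ^\<^sub>m card (carrier G) = 1\<^sub>m n"
    by (metis rep_pow[OF g] rep_one)
  then show ?thesis
    using trace_eq_sum_roots_of_unity[OF rep_carrier[OF g]] g by (simp add: rep_char_eq_trace)
qed

lemma invariant_subspace_joint_eigenspace:
  assumes Ms: "Ms \<subseteq> carrier_mat n n"
    and stable: "\<And>g M. g \<in> carrier G \<Longrightarrow> M \<in> Ms \<Longrightarrow> \<exists>M'\<in>Ms. f M' = f M \<and> M * \<rho> g = \<rho> g * M'"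
  shows "invariant_subspace G n \<rho> {v \<in> carrier_vec n. \<forall>M\<in>Ms. M *\<^sub>v v = f M \<cdot>\<^sub>v v}"
    (is "invariant_subspace G n \<rho> ?W")
proof -
  have zero: "0\<^sub>v n \<in> ?W"
  proof (intro CollectI conjI ballI)
    fix M assume "M \<in> Ms"
    then show "M *\<^sub>v 0\<^sub>v n = f M \<cdot>\<^sub>v 0\<^sub>v n" using Ms by (intro eq_vecI) auto
  qed simp
  have add: "v + w \<in> ?W" if v: "v \<in> ?W" and w: "w \<in> ?W" for v w
  proof (intro CollectI conjI ballI)
    fix M assume M: "M \<in> Ms"
    then have "M \<in> carrier_mat n n" using Ms by blast
    then have "M *\<^sub>v (v + w) = M *\<^sub>v v + M *\<^sub>v w"
      using v w by (intro mult_add_distrib_mat_vec) auto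
    also have "\<dots> = f M \<cdot>\<^sub>v (v + w)"
      using v w M by (simp add: smult_add_distrib_vec[of v n w])
    finally show "M *\<^sub>v (v + w) = f M \<cdot>\<^sub>v (v + w)" .
  qed (use v w in simp)
  have smult: "c \<cdot>\<^sub>v v \<in> ?W" if v: "v \<in> ?W" for c v
  proof (intro CollectI conjI ballI)
    fix M assume M: "M \<in> Ms"
    then have "M \<in> carrier_mat n n" using Ms by blast
    then have "M *\<^sub>v (c \<cdot>\<^sub>v v) = c \<cdot>\<^sub>v (M *\<^sub>v v)"
      using v by (intro mult_mat_vec) auto
    also have "\<dots> = f M \<cdot>\<^sub>v (c \<cdot>\<^sub>v v)"
      using v M by (simp add: smult_smult_assoc mult.commute)
    finally show "M *\<^sub>v (c \<cdot>\<^sub>v v) = f M \<cdot>\<^sub>v (c \<cdot>\<^sub>v v)" .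
  qed (use v in simp)
  have act: "\<rho> g *\<^sub>v v \<in> ?W" if g: "g \<in> carrier G" and v: "v \<in> ?W" for g v
  proof (intro CollectI conjI ballI)
    fix M assume M: "M \<in> Ms"
    obtain M' where M': "M' \<in> Ms" "f M' = f M" "M * \<rho> g = \<rho> g * M'"
      using stable[OF g M] by blast
    have carr: "M \<in> carrier_mat n n" "M' \<in> carrier_mat n n" "v \<in> carrier_vec n"
      using Ms M M'(1) v by auto
    have "M *\<^sub>v (\<rho> g *\<^sub>v v) = (M * \<rho> g) *\<^sub>v v"
      using carr g by (simp add: assoc_mult_mat_vec[OF carr(1) rep_carrier[OF g] carr(3)])
    also have "\<dots> = \<rho> g *\<^sub>v (M' *\<^sub>v v)"
      using carr g M'(3) by (simp add: assoc_mult_mat_vec[OF rep_carrier[OF g] carr(2) carr(3)])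
    also have "\<dots> = f M \<cdot>\<^sub>v (\<rho> g *\<^sub>v v)"
      using M' v carr g by (simp add: mult_mat_vec[OF rep_carrier[OF g] carr(3)])
    finally show "M *\<^sub>v (\<rho> g *\<^sub>v v) = f M \<cdot>\<^sub>v (\<rho> g *\<^sub>v v)" .
  qed (use g v mult_mat_vec_carrier[OF rep_carrier[OF g]] in blast)
  show ?thesis
    unfolding invariant_subspace_def
  proof (intro conjI)
    show "?W \<subseteq> carrier_vec n" by (rule subsetI) simp
    show "0\<^sub>v n \<in> ?W" by (rule zero)
    show "\<forall>v\<in>?W. \<forall>w\<in>?W. v + w \<in> ?W" by (intro ballI) (rule add)
    show "\<forall>c. \<forall>v\<in>?W. c \<cdot>\<^sub>v v \<in> ?W" by (intro allI ballI) (rule smult)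
    show "\<forall>g\<in>carrier G. \<forall>v\<in>?W. \<rho> g *\<^sub>v v \<in> ?W" by (intro ballI) (rule act)
  qed
qed

definition fixed_vecs :: "'a set \<Rightarrow> complex vec set" where
  "fixed_vecs H = {v \<in> carrier_vec n. \<forall>h\<in>H. \<rho> h *\<^sub>v v = v}"

lemma invariant_subspace_fixed_vecs:
  assumes H: "H \<lhd> G"
  shows "invariant_subspace G n \<rho> (fixed_vecs H)"
proof -
  have carr: "h \<in> carrier G" if "h \<in> H" for h
    by (rule subgroup.mem_carrier[OF normal_imp_subgroup[OF H] that])
  have "\<exists>M'\<in>\<rho> ` H. M * \<rho> g = \<rho> g * M'" if g: "g \<in> carrier G" and M: "M \<in> \<rho> ` H" for g M
  proof -
    obtain h where h: "h \<in> H" "M = \<rho> h" using M by blast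
    have "h \<otimes> g = g \<otimes> (inv g \<otimes> h \<otimes> g)"
      using g carr[OF h(1)] by (simp add: m_assoc[symmetric])
    then have "M * \<rho> g = \<rho> g * \<rho> (inv g \<otimes> h \<otimes> g)"
      using g carr[OF h(1)] h by (simp add: rep_mult[symmetric])
    moreover have "inv g \<otimes> h \<otimes> g \<in> H" using normal.inv_op_closed1[OF H g h(1)] .
    ultimately show ?thesis by blast
  qed
  then have "invariant_subspace G n \<rho> {v \<in> carrier_vec n. \<forall>M\<in>\<rho> ` H. M *\<^sub>v v = 1 \<cdot>\<^sub>v v}"
    using carr by (intro invariant_subspace_joint_eigenspace) auto
  then show ?thesis unfolding fixed_vecs_def by simp
qed

lemma sum_rep_col_mem_fixed_vecs:
  assumes H: "subgroup H G" and j: "j < n"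
  shows "vec n (\<lambda>i. \<Sum>h\<in>H. \<rho> h $$ (i, j)) \<in> fixed_vecs H"
  unfolding fixed_vecs_def
proof (intro CollectI conjI ballI)
  fix h' assume h': "h' \<in> H"
  have carr: "h \<in> carrier G" if "h \<in> H" for h
    by (rule subgroup.mem_carrier[OF H that])
  show "\<rho> h' *\<^sub>v vec n (\<lambda>i. \<Sum>h\<in>H. \<rho> h $$ (i, j)) = vec n (\<lambda>i. \<Sum>h\<in>H. \<rho> h $$ (i, j))"
  proof (rule eq_vecI)
    fix k assume "k < dim_vec (vec n (\<lambda>i. \<Sum>h\<in>H. \<rho> h $$ (i, j)))"
    then have k: "k < n" by simp
    have "(\<rho> h' *\<^sub>v vec n (\<lambda>i. \<Sum>h\<in>H. \<rho> h $$ (i, j))) $ k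
        = (\<Sum>l<n. \<rho> h' $$ (k, l) * (\<Sum>h\<in>H. \<rho> h $$ (l, j)))"
      using k carr[OF h'] by (simp add: scalar_prod_def atLeast0LessThan)
    also have "\<dots> = (\<Sum>h\<in>H. \<Sum>l<n. \<rho> h' $$ (k, l) * \<rho> h $$ (l, j))"
      by (simp add: sum_distrib_left sum.swap[of _ H])
    also have "\<dots> = (\<Sum>h\<in>H. \<rho> (h' \<otimes> h) $$ (k, j))"
      using k j carr h' by (intro sum.cong) (auto simp: rep_mult scalar_prod_def atLeast0LessThan)
    also have "\<dots> = (\<Sum>h\<in>H. \<rho> h $$ (k, j))"
      using h' carr subgroup.m_closed[OF H] subgroup.m_inv_closed[OF H]
      by (intro sum.reindex_bij_witness[where i="\<lambda>h. inv h' \<otimes> h" and j="\<lambda>h. h' \<otimes> h"])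
         (auto simp: m_assoc[symmetric])
    finally show "(\<rho> h' *\<^sub>v vec n (\<lambda>i. \<Sum>h\<in>H. \<rho> h $$ (i, j))) $ k
        = vec n (\<lambda>i. \<Sum>h\<in>H. \<rho> h $$ (i, j)) $ k" using k by simp
  qed (use carr h' in simp)
qed simp

lemma sum_rep_eq_0_if_no_fixed_vecs:
  assumes H: "subgroup H G" and none: "fixed_vecs H = {0\<^sub>v n}" and i: "i < n" and j: "j < n"
  shows "(\<Sum>h\<in>H. \<rho> h $$ (i, j)) = 0"
proof -
  have "vec n (\<lambda>i. \<Sum>h\<in>H. \<rho> h $$ (i, j)) = 0\<^sub>v n"
    using sum_rep_col_mem_fixed_vecs[OF H j] none by simp
  then have "vec n (\<lambda>i. \<Sum>h\<in>H. \<rho> h $$ (i, j)) $ i = 0" using i by simp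
  then show ?thesis using i by simp
qed

lemma rep_eq_one_if_all_fixed:
  assumes all: "fixed_vecs H = carrier_vec n" and h: "h \<in> H" "h \<in> carrier G"
  shows "\<rho> h = 1\<^sub>m n"
  using all h unfolding fixed_vecs_def by (intro eq_mat_if_mult_vec_eq[of _ n n]) auto

lemma sum_rep_char_coset_eq_0:
  assumes H: "H \<subseteq> carrier G" and y: "y \<in> carrier G"
    and zero: "\<And>i j. i < n \<Longrightarrow> j < n \<Longrightarrow> (\<Sum>h\<in>H. \<rho> h $$ (i, j)) = 0"
  shows "(\<Sum>h\<in>H. rep_char G n \<rho> (y \<otimes> h)) = 0"
proof -
  have "(\<Sum>h\<in>H. rep_char G n \<rho> (y \<otimes> h)) = (\<Sum>h\<in>H. \<Sum>i<n. \<Sum>k<n. \<rho> y $$ (i, k) * \<rho> h $$ (k, i))"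
    using H y by (intro sum.cong) (auto simp: rep_char_def rep_mult scalar_prod_def atLeast0LessThan)
  also have "\<dots> = (\<Sum>i<n. \<Sum>h\<in>H. \<Sum>k<n. \<rho> y $$ (i, k) * \<rho> h $$ (k, i))"
    by (rule sum.swap)
  also have "\<dots> = (\<Sum>i<n. \<Sum>k<n. \<rho> y $$ (i, k) * (\<Sum>h\<in>H. \<rho> h $$ (k, i)))"
    by (simp add: sum_distrib_left sum.swap[of _ H])
  also have "\<dots> = 0" by (simp add: zero)
  finally show ?thesis .
qed

definition orbit_span :: "complex vec \<Rightarrow> complex vec set" where
  "orbit_span v = {w \<in> carrier_vec n. \<exists>c. \<forall>i<n. w $ i = (\<Sum>g\<in>carrier G. c g * (\<rho> g *\<^sub>v v) $ i)}"

lemma mem_orbit_span: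
  assumes fin: "finite (carrier G)" and v: "v \<in> carrier_vec n"
  shows "v \<in> orbit_span v"
  unfolding orbit_span_def
proof (intro CollectI conjI exI allI impI)
  fix i assume i: "i < n"
  have "(\<Sum>g\<in>carrier G. (if g = \<one> then 1 else 0) * (\<rho> g *\<^sub>v v) $ i)
      = (\<Sum>g\<in>carrier G. if g = \<one> then (\<rho> g *\<^sub>v v) $ i else 0)"
    by (intro sum.cong) auto
  also have "\<dots> = v $ i" using fin v i by simp
  finally show "v $ i = (\<Sum>g\<in>carrier G. (if g = \<one> then 1 else 0) * (\<rho> g *\<^sub>v v) $ i)" ..
qed (rule v)

lemma invariant_subspace_orbit_span:
  assumes v: "v \<in> carrier_vec n"
  shows "invariant_subspace G n \<rho> (orbit_span v)"
proof -
  have zero: "0\<^sub>v n \<in> orbit_span v"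
    unfolding orbit_span_def by (auto intro!: exI[of _ "\<lambda>_. 0"])
  have add: "w + w' \<in> orbit_span v" if span: "w \<in> orbit_span v" "w' \<in> orbit_span v" for w w'
  proof -
    obtain c c' where "w \<in> carrier_vec n" "w' \<in> carrier_vec n"
      and "\<forall>i<n. w $ i = (\<Sum>g\<in>carrier G. c g * (\<rho> g *\<^sub>v v) $ i)"
      and "\<forall>i<n. w' $ i = (\<Sum>g\<in>carrier G. c' g * (\<rho> g *\<^sub>v v) $ i)"
      using span unfolding orbit_span_def by blast
    then show ?thesis unfolding orbit_span_def
      by (auto intro!: exI[of _ "\<lambda>g. c g + c' g"] simp: sum.distrib distrib_right)
  qed
  have smult: "a \<cdot>\<^sub>v w \<in> orbit_span v" if span: "w \<in> orbit_span v" for a w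
  proof -
    obtain c where "w \<in> carrier_vec n" "\<forall>i<n. w $ i = (\<Sum>g\<in>carrier G. c g * (\<rho> g *\<^sub>v v) $ i)"
      using span unfolding orbit_span_def by blast
    then show ?thesis unfolding orbit_span_def
      by (auto intro!: exI[of _ "\<lambda>g. a * c g"] simp: sum_distrib_left mult.assoc)
  qed
  have act: "\<rho> h *\<^sub>v w \<in> orbit_span v" if h: "h \<in> carrier G" and span: "w \<in> orbit_span v" for h w
  proof -
    obtain c where w: "w \<in> carrier_vec n"
      and c: "\<forall>i<n. w $ i = (\<Sum>g\<in>carrier G. c g * (\<rho> g *\<^sub>v v) $ i)"
      using span unfolding orbit_span_def by blast
    define x where "x g k = (\<rho> g *\<^sub>v v) $ k" for g k
    have "(\<rho> h *\<^sub>v w) $ i = (\<Sum>g\<in>carrier G. c (inv h \<otimes> g) * x g i)" if i: "i < n" for i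
    proof -
      have "(\<rho> h *\<^sub>v w) $ i = (\<Sum>k<n. \<rho> h $$ (i, k) * (\<Sum>g\<in>carrier G. c g * x g k))"
        using h w i c unfolding x_def by (simp add: scalar_prod_def atLeast0LessThan)
      also have "\<dots> = (\<Sum>k<n. \<Sum>g\<in>carrier G. c g * (\<rho> h $$ (i, k) * x g k))"
        by (simp add: sum_distrib_left mult.left_commute)
      also have "\<dots> = (\<Sum>g\<in>carrier G. \<Sum>k<n. c g * (\<rho> h $$ (i, k) * x g k))"
        by (rule sum.swap)
      also have "\<dots> = (\<Sum>g\<in>carrier G. c g * (\<rho> h *\<^sub>v (\<rho> g *\<^sub>v v)) $ i)"
        using h i v unfolding x_def
        by (intro sum.cong) (simp_all add: sum_distrib_left scalar_prod_def atLeast0LessThan)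
      also have "\<dots> = (\<Sum>g\<in>carrier G. c g * x (h \<otimes> g) i)"
        using h v unfolding x_def by (intro sum.cong) (simp_all add: rep_mult_vec)
      also have "\<dots> = (\<Sum>g\<in>carrier G. c (inv h \<otimes> g) * x g i)"
        using h by (intro sum.reindex_bij_witness[where i="\<lambda>g. inv h \<otimes> g" and j="\<lambda>g. h \<otimes> g"])
          (auto simp: m_assoc[symmetric])
      finally show ?thesis .
    qed
    then show ?thesis
      using h w mult_mat_vec_carrier[OF rep_carrier[OF h] w] unfolding orbit_span_def x_def
      by (auto intro!: exI[of _ "\<lambda>g. c (inv h \<otimes> g)"])
  qed
  show ?thesis
    unfolding invariant_subspace_def
  proof (intro conjI)
    show "orbit_span v \<subseteq> carrier_vec n" unfolding orbit_span_def by blast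
    show "0\<^sub>v n \<in> orbit_span v" by (rule zero)
    show "\<forall>w\<in>orbit_span v. \<forall>w'\<in>orbit_span v. w + w' \<in> orbit_span v"
      by (intro ballI) (rule add)
    show "\<forall>a. \<forall>w\<in>orbit_span v. a \<cdot>\<^sub>v w \<in> orbit_span v" by (intro allI ballI) (rule smult)
    show "\<forall>h\<in>carrier G. \<forall>w\<in>orbit_span v. \<rho> h *\<^sub>v w \<in> orbit_span v"
      by (intro ballI) (rule act)
  qed
qed

end

locale group_irrep = group G for G (structure) +
  fixes n :: nat and \<rho> :: "'a \<Rightarrow> complex mat"
  assumes irrep: "irrep G n \<rho>"

sublocale group_irrep \<subseteq> group_rep
  using irrep unfolding irrep_def by unfold_locales simp

context group_irrep
begin

lemma invariant_subspace_eq_carrier: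
  assumes "invariant_subspace G n \<rho> W" and "w \<in> W" and "w \<noteq> 0\<^sub>v n"
  shows "W = carrier_vec n"
  using irrep assms unfolding irrep_def by auto

text \<open>The orbit of the first unit vector spans the whole space.\<close>
lemma dim_le_order:
  assumes fin: "finite (carrier G)"
  shows "n \<le> card (carrier G)"
proof -
  let ?e = "\<lambda>j. unit_vec n j :: complex vec"
  have span: "orbit_span (?e 0) = carrier_vec n"
    using dim_pos by (intro invariant_subspace_eq_carrier[OF invariant_subspace_orbit_span
        mem_orbit_span[OF fin]]) auto
  have "\<forall>j\<in>{..<n}. \<exists>c. \<forall>i<n. ?e j $ i = (\<Sum>g\<in>carrier G. c g * (\<rho> g *\<^sub>v ?e 0) $ i)"
  proof
    fix j assume "j \<in> {..<n}"
    have "?e j \<in> orbit_span (?e 0)" unfolding span by simp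
    then show "\<exists>c. \<forall>i<n. ?e j $ i = (\<Sum>g\<in>carrier G. c g * (\<rho> g *\<^sub>v ?e 0) $ i)"
      unfolding orbit_span_def by (rule CollectE) (rule conjunct2)
  qed
  from bchoice[OF this] obtain c where c: "\<And>j i. j < n \<Longrightarrow> i < n \<Longrightarrow>
      ?e j $ i = (\<Sum>g\<in>carrier G. c j g * (\<rho> g *\<^sub>v ?e 0) $ i)"
    by auto
  have "card {..<n} \<le> card (carrier G)"
  proof (rule card_le_if_factors_smult_one[where b="\<lambda>i g. (\<rho> g *\<^sub>v ?e 0) $ i"
        and c="\<lambda>g j. c j g" and d=1])
    fix i j assume "i \<in> {..<n}" "j \<in> {..<n}"
    then show "(\<Sum>g\<in>carrier G. (\<rho> g *\<^sub>v ?e 0) $ i * c j g) = (if i = j then 1 else 0)"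
      using c[of j i] by (simp add: mult.commute)
  qed (use fin in auto)
  then show ?thesis by simp
qed

lemma scalar_if_image_commutes:
  assumes comm: "\<And>g h. g \<in> carrier G \<Longrightarrow> h \<in> carrier G \<Longrightarrow> \<rho> g * \<rho> h = \<rho> h * \<rho> g"
    and g: "g \<in> carrier G"
  shows "\<exists>e. \<rho> g = e \<cdot>\<^sub>m 1\<^sub>m n"
proof -
  obtain e v where ev: "eigenvector (\<rho> g) v e"
    using complex_mat_has_eigenvector[OF rep_carrier[OF g] dim_pos] by blast
  then have v: "v \<in> carrier_vec n" "v \<noteq> 0\<^sub>v n" "\<rho> g *\<^sub>v v = e \<cdot>\<^sub>v v"
    using g unfolding eigenvector_def by auto
  have "invariant_subspace G n \<rho> {w \<in> carrier_vec n. \<forall>M\<in>{\<rho> g}. M *\<^sub>v w = e \<cdot>\<^sub>v w}"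
    using invariant_subspace_joint_eigenspace[of "{\<rho> g}" "\<lambda>_. e"] g comm by auto
  then have "{w \<in> carrier_vec n. \<forall>M\<in>{\<rho> g}. M *\<^sub>v w = e \<cdot>\<^sub>v w} = carrier_vec n"
    using v by (intro invariant_subspace_eq_carrier) auto
  then have "\<rho> g *\<^sub>v w = e \<cdot>\<^sub>v w" if "w \<in> carrier_vec n" for w
    using that by blast
  moreover have "(e \<cdot>\<^sub>m 1\<^sub>m n) *\<^sub>v w = e \<cdot>\<^sub>v w" if "w \<in> carrier_vec n" for w
    using that by (intro eq_vecI) auto
  ultimately have "\<rho> g = e \<cdot>\<^sub>m 1\<^sub>m n"
    using g by (intro eq_mat_if_mult_vec_eq[of _ n n]) auto
  then show ?thesis ..
qed

text \<open>Once every representing matrix is scalar, the coordinate line spanned by the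
  first unit vector is invariant.\<close>
lemma dim_eq_1_if_image_commutes:
  assumes comm: "\<And>g h. g \<in> carrier G \<Longrightarrow> h \<in> carrier G \<Longrightarrow> \<rho> g * \<rho> h = \<rho> h * \<rho> g"
  shows "n = 1"
proof (rule ccontr)
  assume "n \<noteq> 1"
  then have n: "1 < n" using dim_pos by simp
  define P :: "complex mat" where "P = mat n n (\<lambda>(i, j). if i = 0 \<and> j = 0 then 1 else 0)"
  have P: "P \<in> carrier_mat n n" unfolding P_def by simp
  have "P * \<rho> g = \<rho> g * P" if g: "g \<in> carrier G" for g
  proof -
    obtain e where "\<rho> g = e \<cdot>\<^sub>m 1\<^sub>m n" using scalar_if_image_commutes[OF comm g] by blast
    then show ?thesis
      using P by (simp add: mult_smult_distrib[OF P one_carrier_mat] mult_smult_assoc_mat[OF one_carrier_mat P])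
  qed
  then have inv: "invariant_subspace G n \<rho> {v \<in> carrier_vec n. \<forall>M\<in>{P}. M *\<^sub>v v = 1 \<cdot>\<^sub>v v}"
    using P by (intro invariant_subspace_joint_eigenspace) auto
  have "P *\<^sub>v unit_vec n 0 = unit_vec n 0"
    using n by (intro eq_vecI) (auto simp: P_def)
  then have "{v \<in> carrier_vec n. \<forall>M\<in>{P}. M *\<^sub>v v = 1 \<cdot>\<^sub>v v} = carrier_vec n"
    using n by (intro invariant_subspace_eq_carrier[OF inv, of "unit_vec n 0"]) simp_all
  then have "unit_vec n 1 \<in> {v \<in> carrier_vec n. \<forall>M\<in>{P}. M *\<^sub>v v = 1 \<cdot>\<^sub>v v}" by simp
  then have "P *\<^sub>v unit_vec n 1 = unit_vec n 1" by simp
  then have "(P *\<^sub>v unit_vec n 1) $ 1 = 1" using n by simp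
  then show False using n by (simp add: P_def)
qed

lemma fixed_vecs_cases: "H \<lhd> G \<Longrightarrow> fixed_vecs H = {0\<^sub>v n} \<or> fixed_vecs H = carrier_vec n"
  using irrep invariant_subspace_fixed_vecs unfolding irrep_def by blast

end

lemma irrep_if_dim_1:
  assumes "is_rep G 1 \<rho>"
  shows "irrep G 1 \<rho>"
  unfolding irrep_def
proof (intro conjI allI impI assms)
  fix W assume inv: "invariant_subspace G 1 \<rho> W"
  show "W = {0\<^sub>v 1} \<or> W = carrier_vec 1"
  proof (cases "W = {0\<^sub>v 1}")
    case False
    have sub: "W \<subseteq> carrier_vec 1" and zero: "0\<^sub>v 1 \<in> W" and smult: "\<And>c v. v \<in> W \<Longrightarrow> c \<cdot>\<^sub>v v \<in> W"
      using inv unfolding invariant_subspace_def by auto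
    obtain w where w: "w \<in> W" "w \<noteq> 0\<^sub>v 1" using False zero by blast
    then have w0: "w $ 0 \<noteq> 0"
      using sub by (metis carrier_vecD eq_vecI index_zero_vec less_one subsetD)
    have "v \<in> W" if "v \<in> carrier_vec 1" for v :: "complex vec"
    proof -
      have "v = (v $ 0 / w $ 0) \<cdot>\<^sub>v w" using that w sub w0 by (intro eq_vecI) auto
      then show ?thesis using smult[OF w(1)] by metis
    qed
    then show ?thesis using sub by blast
  qed simp
qed

text \<open>Needed because reduced_norm sums over irr_chars G, and a sum over an infinite set
  is 0. Character values are sums of at most card (carrier G) roots of unity of that order.\<close>
lemma finite_irr_chars:
  assumes "group G" and fin: "finite (carrier G)"
  shows "finite (irr_chars G)"
proof -
  define K where "K = card (carrier G)"
  have "K > 0"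
    using fin monoid.one_closed[OF group.is_monoid[OF assms(1)]] by (auto simp: K_def card_gt_0_iff)
  then have "finite {z::complex. z ^ K = 1}" by (intro finite_roots_unity) simp
  then have fin_sums: "finite (sum_list ` {es. set es \<subseteq> {z::complex. z ^ K = 1} \<and> length es \<le> K})"
    by (intro finite_imageI finite_lists_length_le)
  have "irr_chars G \<subseteq> {\<chi>. \<forall>g. (g \<in> carrier G \<longrightarrow>
      \<chi> g \<in> sum_list ` {es. set es \<subseteq> {z::complex. z ^ K = 1} \<and> length es \<le> K}) \<and> (g \<notin> carrier G \<longrightarrow> \<chi> g = 0)}"
  proof safe
    fix \<chi> g assume "\<chi> \<in> irr_chars G"
    then obtain n \<rho> where "irrep G n \<rho>" and \<chi>: "\<chi> = rep_char G n \<rho>"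
      unfolding irr_chars_def by auto
    then interpret group_irrep G n \<rho> by (intro group_irrep.intro group_irrep_axioms.intro assms(1))
    { assume g: "g \<in> carrier G"
      obtain es where "length es = n" "\<forall>e\<in>set es. e ^ K = 1" "rep_char G n \<rho> g = sum_list es"
        using rep_char_eq_sum_roots_of_unity[OF g] unfolding K_def by blast
      then show "\<chi> g \<in> sum_list ` {es. set es \<subseteq> {z. z ^ K = 1} \<and> length es \<le> K}"
        using dim_le_order[OF fin] unfolding \<chi> K_def by auto }
    { assume "g \<notin> carrier G"
      then show "\<chi> g = 0" unfolding \<chi> rep_char_def by simp }
  qed
  then show ?thesis
    using finite_subset finite_set_of_finite_funs[OF fin fin_sums] by blast
qed

section \<open>Linear characters\<close>

definition linear_char :: "('a, 'b) monoid_scheme \<Rightarrow> ('a \<Rightarrow> complex) \<Rightarrow> bool" where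
  "linear_char G \<chi> \<longleftrightarrow> \<chi> \<one>\<^bsub>G\<^esub> = 1 \<and> (\<forall>g\<in>carrier G. \<forall>h\<in>carrier G. \<chi> (g \<otimes>\<^bsub>G\<^esub> h) = \<chi> g * \<chi> h)"

text \<open>A linear character of G/N, inflated to G and extended by zero outside the carrier
  (as rep_char is).\<close>
definition linear_char_of_quotient :: "('a, 'b) monoid_scheme \<Rightarrow> 'a set \<Rightarrow> ('a \<Rightarrow> complex) \<Rightarrow> bool" where
  "linear_char_of_quotient G N \<chi> \<longleftrightarrow>
     linear_char G \<chi> \<and> (\<forall>m\<in>N. \<chi> m = 1) \<and> (\<forall>g. g \<notin> carrier G \<longrightarrow> \<chi> g = 0)"

context group_rep
begin

lemma linear_char_rep_char_if_dim_1:
  assumes "n = 1"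
  shows "linear_char G (rep_char G n \<rho>)"
  unfolding linear_char_def using assms by (simp add: rep_char_def rep_mult scalar_prod_def)

lemma det_eq_rep_char_if_dim_1:
  assumes "n = 1" and g: "g \<in> carrier G"
  shows "det (\<rho> g) = rep_char G n \<rho> g"
  using assms det_single[of "\<rho> g"] rep_carrier[OF g] by (simp add: rep_char_def)

end

lemma (in group) inv_mult_cancel_left [simp]:
  "x \<in> carrier G \<Longrightarrow> y \<in> carrier G \<Longrightarrow> x \<otimes> (inv x \<otimes> y) = y"
  by (simp add: m_assoc[symmetric])

lemma (in group) mult_inv_cancel_left [simp]:
  "x \<in> carrier G \<Longrightarrow> y \<in> carrier G \<Longrightarrow> inv x \<otimes> (x \<otimes> y) = y"
  by (simp add: m_assoc[symmetric])

lemma (in group) linear_char_mult_inv: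
  assumes \<chi>: "linear_char G \<chi>" and g: "g \<in> carrier G"
  shows "\<chi> g * \<chi> (inv g) = 1"
proof -
  have "\<chi> (g \<otimes> inv g) = \<chi> g * \<chi> (inv g)"
    using \<chi> g inv_closed[OF g] unfolding linear_char_def by blast
  then show ?thesis using \<chi> g unfolding linear_char_def by simp
qed

lemma (in group) sum_linear_char_mult_inv:
  assumes A: "subgroup A G" "finite A" and \<chi>: "linear_char G \<chi>" and \<chi>': "linear_char G \<chi>'"
  shows "(\<Sum>a\<in>A. \<chi> a * \<chi>' (inv a)) = (if \<forall>a\<in>A. \<chi> a = \<chi>' a then of_nat (card A) else 0)"
proof (cases "\<forall>a\<in>A. \<chi> a = \<chi>' a")
  case True
  then have "(\<Sum>a\<in>A. \<chi> a * \<chi>' (inv a)) = (\<Sum>a\<in>A. 1)"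
    using linear_char_mult_inv[OF \<chi>'] subgroup.mem_carrier[OF A(1)] by (intro sum.cong) auto
  then show ?thesis using True by simp
next
  case False
  then obtain a0 where a0: "a0 \<in> A" "\<chi> a0 \<noteq> \<chi>' a0" by blast
  have a0c: "a0 \<in> carrier G" using subgroup.mem_carrier[OF A(1) a0(1)] .
  define f where "f a = \<chi> a * \<chi>' (inv a)" for a
  have mult: "f (a0 \<otimes> a) = f a0 * f a" if a: "a \<in> A" for a
  proof -
    have ac: "a \<in> carrier G" using subgroup.mem_carrier[OF A(1) a] .
    have "f (a0 \<otimes> a) = \<chi> a0 * \<chi> a * (\<chi>' (inv a) * \<chi>' (inv a0))"
      using \<chi> \<chi>' a0c ac unfolding f_def linear_char_def by (simp add: inv_mult_group)
    then show ?thesis unfolding f_def by (simp add: algebra_simps)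
  qed
  have "(\<Sum>a\<in>A. f a) = (\<Sum>a\<in>A. f (a0 \<otimes> a))"
    using a0 a0c
    by (intro sum.reindex_bij_witness[where i="\<lambda>a. a0 \<otimes> a" and j="\<lambda>a. inv a0 \<otimes> a"])
      (auto simp: subgroup.mem_carrier[OF A(1)] subgroup.m_closed[OF A(1)] subgroup.m_inv_closed[OF A(1)])
  also have "\<dots> = f a0 * (\<Sum>a\<in>A. f a)"
    using mult by (simp add: sum_distrib_left)
  finally have "(\<Sum>a\<in>A. f a) = f a0 * (\<Sum>a\<in>A. f a)" .
  moreover have "f a0 \<noteq> 1"
  proof
    assume "f a0 = 1"
    then have "\<chi> a0 * \<chi>' (inv a0) = \<chi>' a0 * \<chi>' (inv a0)"
      using linear_char_mult_inv[OF \<chi>' a0c] unfolding f_def by simp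
    moreover have "\<chi>' (inv a0) \<noteq> 0" using linear_char_mult_inv[OF \<chi>' a0c] by auto
    ultimately show False using a0(2) by simp
  qed
  ultimately have "(\<Sum>a\<in>A. f a) = 0"
    by (metis mult_cancel_right1 mult.commute)
  then show ?thesis unfolding f_def by (simp only: if_not_P[OF False])
qed

section \<open>Frobenius groups\<close>

locale frobenius_group = group G for G (structure) +
  fixes A N :: "'a set"
  assumes finite_carrier: "finite (carrier G)"
    and complement_subgroup: "subgroup A G"
    and complement_proper: "A \<noteq> carrier G"
    and complement_malnormal:
      "\<And>g a. g \<in> carrier G \<Longrightarrow> g \<notin> A \<Longrightarrow> a \<in> A \<Longrightarrow> g \<otimes> a \<otimes> inv g \<in> A \<Longrightarrow> a = \<one>"
    and kernel_normal: "N \<lhd> G"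
    and kernel_inter_complement: "N \<inter> A = {\<one>}"
    and kernel_mult_complement: "N <#> A = carrier G"
begin

lemma kernel_subgroup: "subgroup N G"
  by (rule normal_imp_subgroup[OF kernel_normal])

lemma kernel_carrier: "m \<in> N \<Longrightarrow> m \<in> carrier G"
  by (rule subgroup.mem_carrier[OF kernel_subgroup])

lemma complement_carrier: "a \<in> A \<Longrightarrow> a \<in> carrier G"
  by (rule subgroup.mem_carrier[OF complement_subgroup])

lemma finite_kernel: "finite N"
  using finite_carrier kernel_carrier by (meson finite_subset subsetI)

lemma finite_complement: "finite A"
  using finite_carrier complement_carrier by (meson finite_subset subsetI)

lemma inv_off_kernel: "y \<in> carrier G - N \<Longrightarrow> inv y \<in> carrier G - N"
  using subgroup.m_inv_closed[OF kernel_subgroup, of "inv y"] by auto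

lemma kernel_complement_decomp_unique:
  assumes m: "m \<in> N" "m' \<in> N" and a: "a \<in> A" "a' \<in> A" and eq: "m \<otimes> a = m' \<otimes> a'"
  shows "m = m' \<and> a = a'"
proof -
  have c: "m \<in> carrier G" "m' \<in> carrier G" "a \<in> carrier G" "a' \<in> carrier G"
    using m a kernel_carrier complement_carrier by auto
  define x where "x = inv m' \<otimes> m"
  have "x \<in> N" unfolding x_def
    by (intro subgroup.m_closed[OF kernel_subgroup] subgroup.m_inv_closed[OF kernel_subgroup] m)
  have "x \<otimes> a = a'"
    unfolding x_def using c eq by (simp add: m_assoc)
  then have "x = a' \<otimes> inv a" using c \<open>x \<in> N\<close> kernel_carrier inv_solve_right by blast
  then have "x \<in> A"
    using a subgroup.m_closed[OF complement_subgroup] subgroup.m_inv_closed[OF complement_subgroup] by simp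
  then have "x = \<one>" using \<open>x \<in> N\<close> kernel_inter_complement by blast
  then have "m = m'"
    using inv_mult_cancel_left[OF c(2,1)] c unfolding x_def by simp
  then show ?thesis
    using \<open>x \<otimes> a = a'\<close> \<open>x = \<one>\<close> c by simp
qed

lemma card_carrier: "card (carrier G) = card N * card A"
proof -
  have "bij_betw (\<lambda>(m, a). m \<otimes> a) (N \<times> A) (carrier G)"
    unfolding bij_betw_def
  proof
    show "inj_on (\<lambda>(m, a). m \<otimes> a) (N \<times> A)"
      by (auto simp: inj_on_def dest: kernel_complement_decomp_unique)
    show "(\<lambda>(m, a). m \<otimes> a) ` (N \<times> A) = carrier G"
    proof
      show "(\<lambda>(m, a). m \<otimes> a) ` (N \<times> A) \<subseteq> carrier G"
        using kernel_carrier complement_carrier by auto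
      show "carrier G \<subseteq> (\<lambda>(m, a). m \<otimes> a) ` (N \<times> A)"
      proof
        fix x assume "x \<in> carrier G"
        then obtain m a where "m \<in> N" "a \<in> A" "x = m \<otimes> a"
          unfolding kernel_mult_complement[symmetric] set_mult_def by blast
        then show "x \<in> (\<lambda>(m, a). m \<otimes> a) ` (N \<times> A)" by force
      qed
    qed
  qed
  then show ?thesis using bij_betw_same_card card_cartesian_product by metis
qed

lemma conj_complement_unique:
  assumes m: "m \<in> N" "m' \<in> N" and a: "a \<in> A" "a' \<in> A" "a \<noteq> \<one>"
    and eq: "m \<otimes> a \<otimes> inv m = m' \<otimes> a' \<otimes> inv m'"
  shows "m = m' \<and> a = a'"
proof -
  have c: "m \<in> carrier G" "m' \<in> carrier G" "a \<in> carrier G" "a' \<in> carrier G"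
    using m a kernel_carrier complement_carrier by auto
  define g where "g = inv m' \<otimes> m"
  have g: "g \<in> N" "g \<in> carrier G" unfolding g_def
    using m c subgroup.m_closed[OF kernel_subgroup] subgroup.m_inv_closed[OF kernel_subgroup] by auto
  have "g \<otimes> a \<otimes> inv g = inv m' \<otimes> (m \<otimes> a \<otimes> inv m) \<otimes> m'"
    unfolding g_def using c by (simp add: m_assoc inv_mult_group)
  also have "\<dots> = a'" unfolding eq using c by (simp add: m_assoc)
  finally have ga: "g \<otimes> a \<otimes> inv g = a'" .
  have "g \<in> A"
  proof (rule ccontr)
    assume "g \<notin> A"
    then have "a = \<one>" using complement_malnormal[OF g(2) _ a(1)] ga a(2) by simp
    with a(3) show False ..
  qed
  then have "g = \<one>" using g kernel_inter_complement by blast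
  then have "m = m'"
    using inv_mult_cancel_left[OF c(2,1)] c unfolding g_def by simp
  moreover have "a = a'" using ga \<open>g = \<one>\<close> c by simp
  ultimately show ?thesis ..
qed

lemma conj_complement_inj: "inj_on (\<lambda>(m, a). m \<otimes> a \<otimes> inv m) (N \<times> (A - {\<one>}))"
  by (auto simp: inj_on_def dest: conj_complement_unique)

lemma conj_complement_image: "(\<lambda>(m, a). m \<otimes> a \<otimes> inv m) ` (N \<times> (A - {\<one>})) = carrier G - N"
proof (rule card_subset_eq)
  show "(\<lambda>(m, a). m \<otimes> a \<otimes> inv m) ` (N \<times> (A - {\<one>})) \<subseteq> carrier G - N"
  proof
    fix y assume "y \<in> (\<lambda>(m, a). m \<otimes> a \<otimes> inv m) ` (N \<times> (A - {\<one>}))"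
    then obtain m a where m: "m \<in> N" and a: "a \<in> A" "a \<noteq> \<one>" and y: "y = m \<otimes> a \<otimes> inv m"
      by auto
    have c: "m \<in> carrier G" "a \<in> carrier G" using m a kernel_carrier complement_carrier by auto
    have "y \<notin> N"
    proof
      assume "y \<in> N"
      then have "inv m \<otimes> y \<otimes> m \<in> N" using normal.inv_op_closed1[OF kernel_normal c(1)] by blast
      then have "a \<in> N" using c unfolding y by (simp add: m_assoc)
      then show False using a kernel_inter_complement by blast
    qed
    then show "y \<in> carrier G - N" using c y by simp
  qed
  have "card ((\<lambda>(m, a). m \<otimes> a \<otimes> inv m) ` (N \<times> (A - {\<one>}))) = card N * (card A - 1)"
    using subgroup.one_closed[OF complement_subgroup] finite_complement
    by (simp add: card_image[OF conj_complement_inj] card_cartesian_product)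
  also have "\<dots> = card (carrier G - N)"
    using card_carrier finite_kernel kernel_carrier
    by (simp add: card_Diff_subset subset_iff right_diff_distrib')
  finally show "card ((\<lambda>(m, a). m \<otimes> a \<otimes> inv m) ` (N \<times> (A - {\<one>}))) = card (carrier G - N)" .
qed (use finite_carrier in simp)

lemma kernel_centralizer_trivial:
  assumes y: "y \<in> carrier G - N" and m: "m \<in> N" and comm: "m \<otimes> y = y \<otimes> m"
  shows "m = \<one>"
proof -
  obtain k a where k: "k \<in> N" and a: "a \<in> A" "a \<noteq> \<one>" and yk: "y = k \<otimes> a \<otimes> inv k"
    using y unfolding conj_complement_image[symmetric] by auto
  have c: "m \<in> carrier G" "k \<in> carrier G" "a \<in> carrier G" "y \<in> carrier G"
    using m k a y kernel_carrier complement_carrier by auto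
  have "(m \<otimes> k) \<otimes> a \<otimes> inv (m \<otimes> k) = m \<otimes> y \<otimes> inv m"
    unfolding yk using c by (simp add: m_assoc inv_mult_group)
  also have "\<dots> = y" using comm c by (simp add: m_assoc)
  finally have "(\<lambda>(m, a). m \<otimes> a \<otimes> inv m) (m \<otimes> k, a) = (\<lambda>(m, a). m \<otimes> a \<otimes> inv m) (k, a)"
    using yk by simp
  moreover have "m \<otimes> k \<in> N" using subgroup.m_closed[OF kernel_subgroup m k] .
  ultimately have "m \<otimes> k = k"
    using inj_onD[OF conj_complement_inj] k a by blast
  then show "m = \<one>" using c right_cancel[of k m \<one>] by simp
qed

text \<open>For y outside the kernel, h \<mapsto> y\<inverse> h\<inverse> y h is injective on N by the previous
  lemma, hence onto N: the coset y N is a single N-conjugacy class.\<close>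
lemma coset_conj_kernel:
  assumes y: "y \<in> carrier G - N" and m: "m \<in> N"
  shows "\<exists>h\<in>N. y \<otimes> m = inv h \<otimes> y \<otimes> h"
proof -
  define f where "f h = inv y \<otimes> (inv h \<otimes> y \<otimes> h)" for h
  have yc: "y \<in> carrier G" using y by simp
  have f_closed: "f h \<in> N" if h: "h \<in> N" for h
  proof -
    have "inv y \<otimes> inv h \<otimes> y \<in> N"
      using normal.inv_op_closed1[OF kernel_normal yc subgroup.m_inv_closed[OF kernel_subgroup h]] .
    then have "inv y \<otimes> inv h \<otimes> y \<otimes> h \<in> N" by (rule subgroup.m_closed[OF kernel_subgroup _ h])
    then show ?thesis unfolding f_def using h yc kernel_carrier by (simp add: m_assoc)
  qed
  have "inj_on f N"
  proof (rule inj_onI)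
    fix h h' assume h: "h \<in> N" and h': "h' \<in> N" and eq: "f h = f h'"
    have c: "h \<in> carrier G" "h' \<in> carrier G" using h h' kernel_carrier by auto
    have "inv h \<otimes> y \<otimes> h = inv h' \<otimes> y \<otimes> h'" using eq c yc unfolding f_def by simp
    then have "h' \<otimes> (inv h \<otimes> y \<otimes> h) \<otimes> inv h = h' \<otimes> (inv h' \<otimes> y \<otimes> h') \<otimes> inv h" by simp
    then have "(h' \<otimes> inv h) \<otimes> y = y \<otimes> (h' \<otimes> inv h)" using c yc by (simp add: m_assoc)
    moreover have "h' \<otimes> inv h \<in> N"
      by (intro subgroup.m_closed[OF kernel_subgroup] subgroup.m_inv_closed[OF kernel_subgroup] h h')
    ultimately have "h' \<otimes> inv h = \<one>" using kernel_centralizer_trivial[OF y] by blast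
    then have "h' = \<one> \<otimes> h" using inv_solve_right'[of \<one> h' h] c by simp
    then show "h = h'" using c by simp
  qed
  then have "f ` N = N"
    using f_closed finite_kernel by (intro endo_inj_surj) auto
  then obtain h where h: "h \<in> N" "m = f h" using m by blast
  then have "y \<otimes> m = inv h \<otimes> y \<otimes> h"
    unfolding f_def using yc kernel_carrier by simp
  with h(1) show ?thesis ..
qed

lemma rep_char_vanishes_off_kernel:
  assumes "is_rep G n \<rho>" and zero: "\<And>i j. i < n \<Longrightarrow> j < n \<Longrightarrow> (\<Sum>m\<in>N. \<rho> m $$ (i, j)) = 0"
    and y: "y \<in> carrier G - N"
  shows "rep_char G n \<rho> y = 0"
proof -
  interpret group_rep G n \<rho> by (intro group_rep.intro group_rep_axioms.intro is_group assms(1))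
  have "rep_char G n \<rho> (y \<otimes> m) = rep_char G n \<rho> y" if m: "m \<in> N" for m
    using coset_conj_kernel[OF y m] rep_char_conj y kernel_carrier by auto
  then have "of_nat (card N) * rep_char G n \<rho> y = (\<Sum>m\<in>N. rep_char G n \<rho> (y \<otimes> m))"
    by simp
  also have "\<dots> = 0"
    using y kernel_carrier zero by (intro sum_rep_char_coset_eq_0) auto
  finally show ?thesis
    using finite_kernel subgroup.one_closed[OF kernel_subgroup] by auto
qed

lemma linear_char_of_quotient_eqI:
  assumes \<chi>: "linear_char_of_quotient G N \<chi>" and \<chi>': "linear_char_of_quotient G N \<chi>'"
    and eq: "\<And>a. a \<in> A \<Longrightarrow> \<chi> a = \<chi>' a"
  shows "\<chi> = \<chi>'"
proof
  fix g show "\<chi> g = \<chi>' g"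
  proof (cases "g \<in> carrier G")
    case True
    then obtain m a where m: "m \<in> N" and a: "a \<in> A" and g: "g = m \<otimes> a"
      unfolding kernel_mult_complement[symmetric] set_mult_def by blast
    then have "\<chi> g = \<chi> m * \<chi> a" "\<chi>' g = \<chi>' m * \<chi>' a"
      using \<chi> \<chi>' kernel_carrier complement_carrier
      unfolding linear_char_of_quotient_def linear_char_def by auto
    then show ?thesis using \<chi> \<chi>' m eq[OF a] unfolding linear_char_of_quotient_def by simp
  next
    case False
    then show ?thesis using \<chi> \<chi>' unfolding linear_char_of_quotient_def by simp
  qed
qed

text \<open>Distinct linear characters of G/N are orthogonal on A.\<close>
lemma card_linear_chars_of_quotient_le:
  assumes S: "finite S" and lin: "\<And>\<chi>. \<chi> \<in> S \<Longrightarrow> linear_char_of_quotient G N \<chi>"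
  shows "card S \<le> card A"
proof (rule card_le_if_factors_smult_one[where b="\<lambda>\<chi> a. \<chi> a" and c="\<lambda>a \<chi>. \<chi> (inv a)"])
  show "of_nat (card A) \<noteq> (0::complex)"
    using finite_complement subgroup.one_closed[OF complement_subgroup] by auto
  fix \<chi> \<chi>' assume "\<chi> \<in> S" "\<chi>' \<in> S"
  then have \<chi>: "linear_char_of_quotient G N \<chi>" and \<chi>': "linear_char_of_quotient G N \<chi>'"
    using lin by auto
  have "(\<forall>a\<in>A. \<chi> a = \<chi>' a) \<longleftrightarrow> \<chi> = \<chi>'"
    using linear_char_of_quotient_eqI[OF \<chi> \<chi>'] by auto
  moreover have "(\<Sum>a\<in>A. \<chi> a * \<chi>' (inv a)) = (if \<forall>a\<in>A. \<chi> a = \<chi>' a then of_nat (card A) else 0)"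
    using \<chi> \<chi>' unfolding linear_char_of_quotient_def
    by (intro sum_linear_char_mult_inv[OF complement_subgroup finite_complement]) auto
  ultimately show "(\<Sum>a\<in>A. \<chi> a * \<chi>' (inv a)) = (if \<chi> = \<chi>' then of_nat (card A) else 0)"
    by simp
qed (use S finite_complement in auto)

end

section \<open>The reduced norm of a group element\<close>

lemma rep_of_char_irrep:
  assumes "\<chi> \<in> irr_chars G" and "rep_of_char G \<chi> = (n, \<rho>)"
  shows "irrep G n \<rho> \<and> \<chi> = rep_char G n \<rho>"
proof -
  have "\<exists>p. (\<lambda>(n, \<rho>). irrep G n \<rho> \<and> \<chi> = rep_char G n \<rho>) p"
    using assms(1) unfolding irr_chars_def by auto
  from someI_ex[OF this] show ?thesis
    using assms(2) unfolding rep_of_char_def by simp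
qed

lemma rep_alg_grp_elem:
  assumes fin: "finite (carrier G)" and x: "x \<in> carrier G" and \<rho>x: "\<rho> x \<in> carrier_mat n n"
  shows "rep_alg G n \<rho> (grp_elem G x) = \<rho> x"
proof (rule eq_matI)
  fix i j assume "i < dim_row (\<rho> x)" "j < dim_col (\<rho> x)"
  moreover have "(\<Sum>g\<in>carrier G. of_rat (grp_elem G x g) * \<rho> g $$ (i, j)) = \<rho> x $$ (i, j)"
    unfolding grp_elem_def using x fin by (simp add: if_distrib[where f="\<lambda>t. of_rat t * _"] cong: if_cong)
  ultimately show "rep_alg G n \<rho> (grp_elem G x) $$ (i, j) = \<rho> x $$ (i, j)"
    unfolding rep_alg_def using \<rho>x by auto
qed (use \<rho>x in \<open>auto simp: rep_alg_def\<close>)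

lemma of_nat_div_notin_Ints:
  fixes a b :: nat
  assumes "0 < a" and "a < b"
  shows "(of_nat a / of_nat b :: complex) \<notin> \<int>"
proof
  assume "(of_nat a / of_nat b :: complex) \<in> \<int>"
  then obtain z where "(of_nat a / of_nat b :: complex) = of_int z" by (elim Ints_cases)
  then have "(of_int (int a) :: complex) = of_int (z * int b)" using assms by (simp add: divide_eq_eq)
  then have "int a = int b * z" unfolding of_int_eq_iff by simp
  then have "b dvd a" by (metis dvdI int_dvd_int_iff)
  then show False using assms by (simp add: dvd_imp_le leD)
qed

locale frobenius_abelian_quotient = frobenius_group +
  assumes commutator_in_kernel: "\<And>g h. g \<in> carrier G \<Longrightarrow> h \<in> carrier G \<Longrightarrow> g \<otimes> h \<otimes> inv g \<otimes> inv h \<in> N"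
begin

lemma rep_mult_comm_if_trivial_on_kernel:
  assumes "is_rep G n \<rho>" and triv: "\<And>m. m \<in> N \<Longrightarrow> \<rho> m = 1\<^sub>m n"
    and g: "g \<in> carrier G" and h: "h \<in> carrier G"
  shows "\<rho> g * \<rho> h = \<rho> h * \<rho> g"
proof -
  interpret group_rep G n \<rho> by (intro group_rep.intro group_rep_axioms.intro is_group assms(1))
  have c: "g \<otimes> h \<otimes> inv g \<otimes> inv h \<in> N" using commutator_in_kernel[OF g h] .
  have "g \<otimes> h = (g \<otimes> h \<otimes> inv g \<otimes> inv h) \<otimes> (h \<otimes> g)" using g h by (simp add: m_assoc)
  then have "\<rho> (g \<otimes> h) = \<rho> (g \<otimes> h \<otimes> inv g \<otimes> inv h) * \<rho> (h \<otimes> g)"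
    using g h by (simp add: rep_mult[symmetric])
  also have "\<dots> = \<rho> (h \<otimes> g)" using triv[OF c] g h by simp
  finally show ?thesis using g h by (simp add: rep_mult)
qed

text \<open>The N-fixed vectors form an invariant subspace, so N acts either trivially or
  without nonzero fixed vectors.\<close>
lemma irrep_cases:
  assumes "irrep G n \<rho>"
  shows "(n = 1 \<and> (\<forall>m\<in>N. \<rho> m = 1\<^sub>m n)) \<or> (\<forall>y\<in>carrier G - N. rep_char G n \<rho> y = 0)"
proof -
  interpret group_irrep G n \<rho>
    by (intro group_irrep.intro group_irrep_axioms.intro is_group assms)
  consider "fixed_vecs N = carrier_vec n" | "fixed_vecs N = {0\<^sub>v n}"
    using fixed_vecs_cases[OF kernel_normal] by blast
  then show ?thesis
  proof cases
    case 1
    then have triv: "\<rho> m = 1\<^sub>m n" if "m \<in> N" for m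
      using rep_eq_one_if_all_fixed that kernel_carrier by blast
    then have "n = 1"
      using rep_mult_comm_if_trivial_on_kernel[OF is_rep] by (intro dim_eq_1_if_image_commutes) blast
    with triv show ?thesis by blast
  next
    case 2
    then show ?thesis
      using rep_char_vanishes_off_kernel[OF is_rep] sum_rep_eq_0_if_no_fixed_vecs[OF kernel_subgroup]
      by blast
  qed
qed

lemma irr_char_dim_1_if_nonvanishing:
  assumes \<chi>: "\<chi> \<in> irr_chars G" and rep: "rep_of_char G \<chi> = (n, \<rho>)"
    and y: "y \<in> carrier G - N" and nz: "\<chi> y \<noteq> 0"
  shows "n = 1 \<and> (\<forall>m\<in>N. \<rho> m = 1\<^sub>m n)"
  using irrep_cases rep_of_char_irrep[OF \<chi> rep] y nz by blast

lemma linear_char_of_quotient_if_nonvanishing: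
  assumes \<chi>: "\<chi> \<in> irr_chars G" and y: "y \<in> carrier G - N" and nz: "\<chi> y \<noteq> 0"
  shows "linear_char_of_quotient G N \<chi>"
proof -
  obtain n \<rho> where rep: "rep_of_char G \<chi> = (n, \<rho>)" by fastforce
  have ir: "irrep G n \<rho>" and \<chi>_eq: "\<chi> = rep_char G n \<rho>" using rep_of_char_irrep[OF \<chi> rep] by auto
  interpret group_irrep G n \<rho>
    by (intro group_irrep.intro group_irrep_axioms.intro is_group ir)
  have n: "n = 1" and triv: "\<And>m. m \<in> N \<Longrightarrow> \<rho> m = 1\<^sub>m n"
    using irr_char_dim_1_if_nonvanishing[OF \<chi> rep y nz] by auto
  show ?thesis
    unfolding linear_char_of_quotient_def \<chi>_eq
    using linear_char_rep_char_if_dim_1[OF n] triv n kernel_carrier by (auto simp: rep_char_def)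
qed

lemma reduced_norm_summand_off_kernel:
  assumes \<chi>: "\<chi> \<in> irr_chars G" and x: "x \<in> carrier G - N"
  shows "(case rep_of_char G \<chi> of (n, \<rho>) \<Rightarrow> det (rep_alg G n \<rho> (grp_elem G x))) * \<chi> \<one> * \<chi> (inv x)
    = (if \<chi> (inv x) = 0 then 0 else 1)"
proof (cases "\<chi> (inv x) = 0")
  case False
  obtain n \<rho> where rep: "rep_of_char G \<chi> = (n, \<rho>)" by fastforce
  have ir: "irrep G n \<rho>" and \<chi>_eq: "\<chi> = rep_char G n \<rho>" using rep_of_char_irrep[OF \<chi> rep] by auto
  interpret group_irrep G n \<rho>
    by (intro group_irrep.intro group_irrep_axioms.intro is_group ir)
  have xc: "x \<in> carrier G" and ix: "inv x \<in> carrier G - N"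
    using x inv_off_kernel by auto
  have n: "n = 1" using irr_char_dim_1_if_nonvanishing[OF \<chi> rep ix False] by blast
  have lin: "linear_char G \<chi>" using linear_char_rep_char_if_dim_1[OF n] \<chi>_eq by simp
  have "det (rep_alg G n \<rho> (grp_elem G x)) = \<chi> x"
    using rep_alg_grp_elem[of G x \<rho> n, OF finite_carrier xc rep_carrier[OF xc]] det_eq_rep_char_if_dim_1[OF n xc] \<chi>_eq
    by simp
  then show ?thesis
    using rep False linear_char_mult_inv[OF lin xc] lin unfolding linear_char_def by simp
qed simp

lemma reduced_norm_grp_elem_off_kernel:
  assumes x: "x \<in> carrier G - N"
  shows "reduced_norm G (grp_elem G x) x
    = of_nat (card {\<chi> \<in> irr_chars G. \<chi> (inv x) \<noteq> 0}) / of_nat (card (carrier G))"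
proof -
  let ?d = "\<lambda>\<chi>. case rep_of_char G \<chi> of (n, \<rho>) \<Rightarrow> det (rep_alg G n \<rho> (grp_elem G x))"
  have "reduced_norm G (grp_elem G x) x
      = (\<Sum>\<chi>\<in>irr_chars G. ?d \<chi> * \<chi> \<one> / of_nat (card (carrier G)) * \<chi> (inv x))"
    using x by (simp add: reduced_norm_def)
  also have "\<dots> = (\<Sum>\<chi>\<in>irr_chars G. if \<chi> (inv x) \<noteq> 0 then 1 / of_nat (card (carrier G)) else 0)"
  proof (rule sum.cong[OF refl])
    fix \<chi> assume \<chi>: "\<chi> \<in> irr_chars G"
    have "?d \<chi> * \<chi> \<one> / of_nat (card (carrier G)) * \<chi> (inv x)
        = ?d \<chi> * \<chi> \<one> * \<chi> (inv x) / of_nat (card (carrier G))"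
      by (simp only: times_divide_eq_left)
    then show "?d \<chi> * \<chi> \<one> / of_nat (card (carrier G)) * \<chi> (inv x)
        = (if \<chi> (inv x) \<noteq> 0 then 1 / of_nat (card (carrier G)) else 0)"
      using reduced_norm_summand_off_kernel[OF \<chi> x] by simp
  qed
  also have "\<dots> = (\<Sum>\<chi>\<in>{\<chi> \<in> irr_chars G. \<chi> (inv x) \<noteq> 0}. 1 / of_nat (card (carrier G)))"
    using finite_irr_chars[OF is_group finite_carrier] by (rule sum.inter_filter[symmetric])
  finally show ?thesis by simp
qed

lemma card_nonvanishing_irr_chars:
  assumes x: "x \<in> carrier G - N"
  shows "0 < card {\<chi> \<in> irr_chars G. \<chi> (inv x) \<noteq> 0}"
    and "card {\<chi> \<in> irr_chars G. \<chi> (inv x) \<noteq> 0} < card (carrier G)"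
proof -
  let ?S = "{\<chi> \<in> irr_chars G. \<chi> (inv x) \<noteq> 0}"
  have fin: "finite ?S" using finite_irr_chars[OF is_group finite_carrier] by simp
  have ix: "inv x \<in> carrier G - N" using inv_off_kernel[OF x] .
  have "rep_char G 1 (\<lambda>_. 1\<^sub>m 1) \<in> ?S"
    using irrep_if_dim_1[of G "\<lambda>_. 1\<^sub>m 1"] ix unfolding irr_chars_def
    by (auto simp: is_rep_def rep_char_def)
  then show "0 < card ?S" using fin by (auto simp: card_gt_0_iff)
  have "card ?S \<le> card A"
    using fin linear_char_of_quotient_if_nonvanishing[OF _ ix] by (intro card_linear_chars_of_quotient_le) auto
  also have "card A < card (carrier G)"
    using complement_carrier complement_proper finite_carrier by (intro psubset_card_mono) auto
  finally show "card ?S < card (carrier G)" .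
qed

end

lemma (in group) frobenius_abelian_quotient_derived:
  assumes "frobenius_kernel G A (derived G (carrier G))"
  shows "frobenius_abelian_quotient G A (derived G (carrier G))"
proof -
  from assms have fin: "finite (carrier G)" and A: "subgroup A G" and proper: "A \<noteq> carrier G"
    and malnormal: "\<forall>g \<in> carrier G - A. A \<inter> (g <# A #> inv g) = {\<one>}"
    and normal: "derived G (carrier G) \<lhd> G"
    and inter: "derived G (carrier G) \<inter> A = {\<one>}"
    and mult: "derived G (carrier G) <#> A = carrier G"
    unfolding frobenius_kernel_def frobenius_complement_def by auto
  show ?thesis
  proof (intro frobenius_abelian_quotient.intro frobenius_group.intro frobenius_group_axioms.intro
      frobenius_abelian_quotient_axioms.intro is_group fin A proper normal inter mult)
    fix g a assume g: "g \<in> carrier G" "g \<notin> A" and a: "a \<in> A" and gag: "g \<otimes> a \<otimes> inv g \<in> A"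
    have ac: "a \<in> carrier G" using subgroup.mem_carrier[OF A a] .
    have "g \<otimes> a \<otimes> inv g \<in> g <# A #> inv g"
      unfolding l_coset_def r_coset_def using a by blast
    then have "g \<otimes> a \<otimes> inv g = \<one>" using malnormal g gag by blast
    then have "g \<otimes> a = \<one> \<otimes> g" using inv_solve_right'[of \<one> "g \<otimes> a" g] g ac by simp
    then show "a = \<one>" using g ac by simp
  next
    fix g h assume "g \<in> carrier G" "h \<in> carrier G"
    then show "g \<otimes> h \<otimes> inv g \<otimes> inv h \<in> derived G (carrier G)"
      unfolding derived_def by (blast intro: generate.incl)
  qed
qed

theorem lemma3p12:
  fixes G :: "('a, 'b) monoid_scheme" and A :: "'a set"
  assumes "frobenius_kernel G A (derived G (carrier G))"
  shows "\<forall>x \<in> carrier G - derived G (carrier G).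
           \<not> in_integral_group_ring G (reduced_norm G (grp_elem G x))"
proof
  fix x assume x: "x \<in> carrier G - derived G (carrier G)"
  have "group G" using assms unfolding frobenius_kernel_def frobenius_complement_def by blast
  then interpret frobenius_abelian_quotient G A "derived G (carrier G)"
    using group.frobenius_abelian_quotient_derived[OF _ assms] by blast
  have "reduced_norm G (grp_elem G x) x \<notin> \<int>"
    unfolding reduced_norm_grp_elem_off_kernel[OF x]
    using card_nonvanishing_irr_chars[OF x] by (rule of_nat_div_notin_Ints)
  then show "\<not> in_integral_group_ring G (reduced_norm G (grp_elem G x))"
    using x unfolding in_integral_group_ring_def by auto
qed

end
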